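(* Let $i\in\{1,2\}$, let $Z$ be a digital image and $\tau:Z\times Z\to Z$ an $\mathrm{NP}_i$-continuous map. Let $X=Z\sqcup\{e\}$ be the disjoint union, where the new point $e$ is adjacent only to itself, and define $\mu:X\times X\to X$ by $\mu(a,b)=\tau(a,b)$ if $a,b\in Z$, $\mu(a,e)=a$, and $\mu(e,b)=b$. Then $\mu$ is $\mathrm{NP}_i$-continuous and $(X,e,\mu)$ is a unital $\mathrm{NP}_i$-digital H-space. Moreover, if some connected component of $Z$ is not $\mathrm{NP}_i$-contractible, then $(X,e,\mu)$ is not H-equivalent to any $\mathrm{NP}_i$-digital topological group.
   Context: A digital image is a finite set with a reflexive symmetric adjacency relation (a finite reflexive graph); continuous maps send adjacent points to adjacent points. On products, $\mathrm{NP}_u$ declares two tuples adjacent iff coordinates are adjacent in at most $u$ positions and equal elsewhere. An $\mathrm{NP}_i$-homotopy from $f$ to $g:X\to Y$ is an $\mathrm{NP}_i$-continuous $H:X\times[0,m]_{\mathbb{Z}}\to Y$ with $H(\cdot,0)=f$, $H(\cdot,m)=g$; write $f\simeq_i g$. $\mathrm{NP}_i$-contractible means $\mathrm{NP}_i$-homotopy equivalent to a single point. $(f,g)(x)=(f(x),g(x))$, $(f\times g)(x,y)=(f(x),g(y))$; $c_e$ is constant at $e$. An $\mathrm{NP}_i$-digital H-space is $(X,e,\mu)$ with $\mu:X\times X\to X$ $\mathrm{NP}_i$-continuous, $\mu\circ(\mathrm{id}_X,c_e)\simeq_i\mathrm{id}_X$, $\mu\circ(c_e,\mathrm{id}_X)\simeq_i\mathrm{id}_X$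 (homotopies need not be pointed); unital if both composites equal $\mathrm{id}_X$. An $\mathrm{NP}_i$-digital topological group is a digital image $G$ with a group structure whose multiplication $G\times G\to G$ is $\mathrm{NP}_i$-continuous and whose inversion $G\to G$ is continuous; it is regarded as an H-space with its identity element and multiplication. Two H-spaces $(X,e_X,\mu_X)$, $(Y,e_Y,\mu_Y)$ are H-equivalent if there are continuous pointed maps $f:(X,e_X)\to(Y,e_Y)$, $g:(Y,e_Y)\to(X,e_X)$ with $f\circ g\simeq_i\mathrm{id}_Y$, $g\circ f\simeq_i\mathrm{id}_X$, $f\circ\mu_X\simeq_i\mu_Y\circ(f\times f)$, $g\circ\mu_Y\simeq_i\mu_X\circ(g\times g)$. *)

theory Defs
  imports "HOL-Algebra.Group"
begin

definition digital_image :: "'a set \<Rightarrow> ('a \<Rightarrow> 'a \<Rightarrow> bool) \<Rightarrow> bool" where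
  "digital_image X A \<longleftrightarrow> finite X \<and> (\<forall>x\<in>X. A x x) \<and> (\<forall>x\<in>X. \<forall>y\<in>X. A x y \<longrightarrow> A y x)"

definition dcont :: "'a set \<Rightarrow> ('a \<Rightarrow> 'a \<Rightarrow> bool) \<Rightarrow> 'b set \<Rightarrow> ('b \<Rightarrow> 'b \<Rightarrow> bool) \<Rightarrow> ('a \<Rightarrow> 'b) \<Rightarrow> bool" where
  "dcont X A Y B f \<longleftrightarrow> (\<forall>x\<in>X. f x \<in> Y) \<and> (\<forall>x\<in>X. \<forall>x'\<in>X. A x x' \<longrightarrow> B (f x) (f x'))"

definition ndiff :: "'a \<Rightarrow> 'a \<Rightarrow> nat" where
  "ndiff x y = (if x = y then 0 else 1)"

definition pair_adj :: "('a \<Rightarrow> 'a \<Rightarrow> bool) \<Rightarrow> ('b \<Rightarrow> 'b \<Rightarrow> bool) \<Rightarrow> 'a \<times> 'b \<Rightarrow> 'a \<times> 'b \<Rightarrow> bool" where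
  "pair_adj A B p q \<longleftrightarrow> A (fst p) (fst q) \<and> B (snd p) (snd q)"

definition pair_ndiff :: "'a \<times> 'b \<Rightarrow> 'a \<times> 'b \<Rightarrow> nat" where
  "pair_ndiff p q = ndiff (fst p) (fst q) + ndiff (snd p) (snd q)"

definition np_adj :: "nat \<Rightarrow> ('a \<Rightarrow> 'a \<Rightarrow> bool) \<Rightarrow> ('b \<Rightarrow> 'b \<Rightarrow> bool) \<Rightarrow> 'a \<times> 'b \<Rightarrow> 'a \<times> 'b \<Rightarrow> bool" where
  "np_adj u A B p q \<longleftrightarrow> pair_adj A B p q \<and> pair_ndiff p q \<le> u"

definition iadj :: "nat \<Rightarrow> nat \<Rightarrow> bool" where
  "iadj s t \<longleftrightarrow> s \<le> t + 1 \<and> t \<le> s + 1"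

text \<open>NP_u-homotopy between maps S \<rightarrow> Y, where the domain S is itself a (flat) product
  of factors, given by the coordinatewise adjacency A and the count d of differing
  coordinates.\<close>
definition np_htpy_gen :: "nat \<Rightarrow> 's set \<Rightarrow> ('s \<Rightarrow> 's \<Rightarrow> bool) \<Rightarrow> ('s \<Rightarrow> 's \<Rightarrow> nat)
    \<Rightarrow> 'b set \<Rightarrow> ('b \<Rightarrow> 'b \<Rightarrow> bool) \<Rightarrow> ('s \<Rightarrow> 'b) \<Rightarrow> ('s \<Rightarrow> 'b) \<Rightarrow> bool" where
  "np_htpy_gen u S A d Y B f g \<longleftrightarrow>
     (\<exists>(m::nat) (H :: 's \<times> nat \<Rightarrow> 'b).
        (\<forall>s\<in>S. H (s, 0) = f s \<and> H (s, m) = g s) \<and>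
        (\<forall>s\<in>S. \<forall>t\<in>{0..m}. H (s, t) \<in> Y) \<and>
        (\<forall>s\<in>S. \<forall>s'\<in>S. \<forall>t\<in>{0..m}. \<forall>t'\<in>{0..m}.
            A s s' \<and> iadj t t' \<and> d s s' + ndiff t t' \<le> u \<longrightarrow> B (H (s, t)) (H (s', t'))))"

definition np_htpy :: "nat \<Rightarrow> 'a set \<Rightarrow> ('a \<Rightarrow> 'a \<Rightarrow> bool) \<Rightarrow> 'b set \<Rightarrow> ('b \<Rightarrow> 'b \<Rightarrow> bool)
    \<Rightarrow> ('a \<Rightarrow> 'b) \<Rightarrow> ('a \<Rightarrow> 'b) \<Rightarrow> bool" where
  "np_htpy u X A Y B f g \<longleftrightarrow> np_htpy_gen u X A ndiff Y B f g"

definition np_htpy2 :: "nat \<Rightarrow> 'a set \<Rightarrow> ('a \<Rightarrow> 'a \<Rightarrow> bool) \<Rightarrow> 'b set \<Rightarrow> ('b \<Rightarrow> 'b \<Rightarrow> bool)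
    \<Rightarrow> ('a \<times> 'a \<Rightarrow> 'b) \<Rightarrow> ('a \<times> 'a \<Rightarrow> 'b) \<Rightarrow> bool" where
  "np_htpy2 u X A Y B f g \<longleftrightarrow> np_htpy_gen u (X \<times> X) (pair_adj A A) pair_ndiff Y B f g"

definition np_hequiv :: "nat \<Rightarrow> 'a set \<Rightarrow> ('a \<Rightarrow> 'a \<Rightarrow> bool) \<Rightarrow> 'b set \<Rightarrow> ('b \<Rightarrow> 'b \<Rightarrow> bool) \<Rightarrow> bool" where
  "np_hequiv u X A Y B \<longleftrightarrow> (\<exists>f g. dcont X A Y B f \<and> dcont Y B X A g \<and>
      np_htpy u X A X A (g \<circ> f) id \<and> np_htpy u Y B Y B (f \<circ> g) id)"

definition np_contractible :: "nat \<Rightarrow> 'a set \<Rightarrow> ('a \<Rightarrow> 'a \<Rightarrow> bool) \<Rightarrow> bool" where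
  "np_contractible u X A \<longleftrightarrow> np_hequiv u X A ({()} :: unit set) (\<lambda>_ _. True)"

definition dcomponent :: "'a set \<Rightarrow> ('a \<Rightarrow> 'a \<Rightarrow> bool) \<Rightarrow> 'a \<Rightarrow> 'a set" where
  "dcomponent X A x = {y \<in> X. (\<lambda>a b. a \<in> X \<and> b \<in> X \<and> A a b)\<^sup>*\<^sup>* x y}"

definition np_hspace :: "nat \<Rightarrow> 'a set \<Rightarrow> ('a \<Rightarrow> 'a \<Rightarrow> bool) \<Rightarrow> 'a \<Rightarrow> ('a \<times> 'a \<Rightarrow> 'a) \<Rightarrow> bool" where
  "np_hspace u X A e \<mu> \<longleftrightarrow> digital_image X A \<and> e \<in> X \<and>
     dcont (X \<times> X) (np_adj u A A) X A \<mu> \<and>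
     np_htpy u X A X A (\<lambda>x. \<mu> (x, e)) id \<and> np_htpy u X A X A (\<lambda>x. \<mu> (e, x)) id"

definition np_unital_hspace :: "nat \<Rightarrow> 'a set \<Rightarrow> ('a \<Rightarrow> 'a \<Rightarrow> bool) \<Rightarrow> 'a \<Rightarrow> ('a \<times> 'a \<Rightarrow> 'a) \<Rightarrow> bool" where
  "np_unital_hspace u X A e \<mu> \<longleftrightarrow> np_hspace u X A e \<mu> \<and> (\<forall>x\<in>X. \<mu> (x, e) = x \<and> \<mu> (e, x) = x)"

definition np_dtop_group :: "nat \<Rightarrow> 'g monoid \<Rightarrow> ('g \<Rightarrow> 'g \<Rightarrow> bool) \<Rightarrow> bool" where
  "np_dtop_group u G B \<longleftrightarrow> group G \<and> digital_image (carrier G) B \<and>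
     dcont (carrier G \<times> carrier G) (np_adj u B B) (carrier G) B (\<lambda>p. fst p \<otimes>\<^bsub>G\<^esub> snd p) \<and>
     dcont (carrier G) B (carrier G) B (\<lambda>x. inv\<^bsub>G\<^esub> x)"

definition np_h_equiv :: "nat \<Rightarrow> 'a set \<Rightarrow> ('a \<Rightarrow> 'a \<Rightarrow> bool) \<Rightarrow> 'a \<Rightarrow> ('a \<times> 'a \<Rightarrow> 'a)
    \<Rightarrow> 'b set \<Rightarrow> ('b \<Rightarrow> 'b \<Rightarrow> bool) \<Rightarrow> 'b \<Rightarrow> ('b \<times> 'b \<Rightarrow> 'b) \<Rightarrow> bool" where
  "np_h_equiv u X A eX \<mu>X Y B eY \<mu>Y \<longleftrightarrow>
     (\<exists>f g. dcont X A Y B f \<and> f eX = eY \<and> dcont Y B X A g \<and> g eY = eX \<and>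
        np_htpy u Y B Y B (f \<circ> g) id \<and> np_htpy u X A X A (g \<circ> f) id \<and>
        np_htpy2 u X A Y B (f \<circ> \<mu>X) (\<mu>Y \<circ> map_prod f f) \<and>
        np_htpy2 u Y B X A (g \<circ> \<mu>Y) (\<mu>X \<circ> map_prod g g))"

text \<open>Adjoining an isolated point e = None to Z, and the extended multiplication.\<close>
definition adj_point_adj :: "('a \<Rightarrow> 'a \<Rightarrow> bool) \<Rightarrow> 'a option \<Rightarrow> 'a option \<Rightarrow> bool" where
  "adj_point_adj A a b = (case (a, b) of (Some x, Some y) \<Rightarrow> A x y
                                       | (None, None) \<Rightarrow> True
                                       | _ \<Rightarrow> False)"

definition adj_point_mult :: "('a \<times> 'a \<Rightarrow> 'a) \<Rightarrow> 'a option \<times> 'a option \<Rightarrow> 'a option" where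
  "adj_point_mult \<tau> p = (case p of (Some x, Some y) \<Rightarrow> Some (\<tau> (x, y))
                                 | (a, None) \<Rightarrow> a
                                 | (None, b) \<Rightarrow> b)"

end

theory Submission
  imports Defs
begin

text \<open>The unit e of X = Z + {e} is an isolated point, so a pointed homotopy equivalence
  f : X -> G, g : G -> X to a digital topological group maps the component of the identity
  of G onto e under g. If C is the component of z in Z and a = f z, left translation by a^-1
  moves f(C) into that component, so g (a^-1 f c) = e for c in C. Conjugating the homotopy
  f g ~ id by this translation and applying g yields a homotopy on C from the constant map
  g a to g f, and composing with g f ~ id null-homotopes the inclusion of C into X; since a
  homotopy stays in one component, C is contractible.\<close>

lemma np_htpy_genI:
  assumes "\<And>s. s \<in> S \<Longrightarrow> H (s, 0) = f s" and "\<And>s. s \<in> S \<Longrightarrow> H (s, m) = g s"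
    and "\<And>s t. s \<in> S \<Longrightarrow> t \<le> m \<Longrightarrow> H (s, t) \<in> Y"
    and "\<And>s s' t t'. \<lbrakk>s \<in> S; s' \<in> S; t \<le> m; t' \<le> m; A s s'; iadj t t'; d s s' + ndiff t t' \<le> u\<rbrakk>
           \<Longrightarrow> B (H (s, t)) (H (s', t'))"
  shows "np_htpy_gen u S A d Y B f g"
  unfolding np_htpy_gen_def using assms by (intro exI[of _ m] exI[of _ H]) auto

lemma np_htpy_genE:
  assumes "np_htpy_gen u S A d Y B f g"
  obtains m H where "\<And>s. s \<in> S \<Longrightarrow> H (s, 0) = f s" and "\<And>s. s \<in> S \<Longrightarrow> H (s, m) = g s"
    and "\<And>s t. s \<in> S \<Longrightarrow> t \<le> m \<Longrightarrow> H (s, t) \<in> Y"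
    and "\<And>s s' t t'. \<lbrakk>s \<in> S; s' \<in> S; t \<le> m; t' \<le> m; A s s'; iadj t t'; d s s' + ndiff t t' \<le> u\<rbrakk>
           \<Longrightarrow> B (H (s, t)) (H (s', t'))"
proof -
  from assms obtain m H where "\<forall>s\<in>S. H (s, 0) = f s \<and> H (s, m) = g s" "\<forall>s\<in>S. \<forall>t\<in>{0..m}. H (s, t) \<in> Y"
    "\<forall>s\<in>S. \<forall>s'\<in>S. \<forall>t\<in>{0..m}. \<forall>t'\<in>{0..m}.
       A s s' \<and> iadj t t' \<and> d s s' + ndiff t t' \<le> u \<longrightarrow> B (H (s, t)) (H (s', t'))"
    unfolding np_htpy_gen_def by blast
  then show thesis by (intro that) auto
qed

lemma np_htpy_gen_start_mem:
  assumes "np_htpy_gen u S A d Y B f g" and "s \<in> S"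
  shows "f s \<in> Y"
  using assms by (elim np_htpy_genE) (metis le0)

lemma np_htpy_gen_cong:
  assumes "np_htpy_gen u S A d Y B f g"
    and "\<And>s. s \<in> S \<Longrightarrow> f s = f' s" and "\<And>s. s \<in> S \<Longrightarrow> g s = g' s"
  shows "np_htpy_gen u S A d Y B f' g'"
  using assms unfolding np_htpy_gen_def by auto

lemma np_htpy_gen_refl:
  assumes "dcont S A Y B f"
  shows "np_htpy_gen u S A d Y B f f"
  using assms by (intro np_htpy_genI[where m = 0 and H = "f \<circ> fst"]) (auto simp: dcont_def)

lemma np_htpy_gen_trans:
  assumes "np_htpy_gen u S A d Y B f g" and "np_htpy_gen u S A d Y B g h"
  shows "np_htpy_gen u S A d Y B f h"
proof -
  obtain H1 m1 where H1: "\<And>s. s \<in> S \<Longrightarrow> H1 (s, 0) = f s" "\<And>s. s \<in> S \<Longrightarrow> H1 (s, m1) = g s"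
    "\<And>s t. s \<in> S \<Longrightarrow> t \<le> m1 \<Longrightarrow> H1 (s, t) \<in> Y"
    "\<And>s s' t t'. \<lbrakk>s \<in> S; s' \<in> S; t \<le> m1; t' \<le> m1; A s s'; iadj t t'; d s s' + ndiff t t' \<le> u\<rbrakk>
       \<Longrightarrow> B (H1 (s, t)) (H1 (s', t'))"
    using assms(1) by (elim np_htpy_genE) blast
  obtain H2 m2 where H2: "\<And>s. s \<in> S \<Longrightarrow> H2 (s, 0) = g s" "\<And>s. s \<in> S \<Longrightarrow> H2 (s, m2) = h s"
    "\<And>s t. s \<in> S \<Longrightarrow> t \<le> m2 \<Longrightarrow> H2 (s, t) \<in> Y"
    "\<And>s s' t t'. \<lbrakk>s \<in> S; s' \<in> S; t \<le> m2; t' \<le> m2; A s s'; iadj t t'; d s s' + ndiff t t' \<le> u\<rbrakk>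
       \<Longrightarrow> B (H2 (s, t)) (H2 (s', t'))"
    using assms(2) by (elim np_htpy_genE) blast
  define H where "H p = (if snd p \<le> m1 then H1 p else H2 (fst p, snd p - m1))" for p
  have H_first: "H (s, t) = H1 (s, t)" if "t \<le> m1" for s t
    using that by (simp add: H_def)
  have H_second: "H (s, t) = H2 (s, t - m1)" if "s \<in> S" "m1 \<le> t" for s t
    using that H1(2) H2(1) by (auto simp: H_def)
  show ?thesis
  proof (rule np_htpy_genI[where m = "m1 + m2" and H = H])
    fix s t assume "s \<in> S" "t \<le> m1 + m2"
    then show "H (s, t) \<in> Y"
      by (cases "t \<le> m1") (simp_all add: H_first H_second H1(3) H2(3))
  next
    fix s s' t t'
    assume s: "s \<in> S" "s' \<in> S" and t: "t \<le> m1 + m2" "t' \<le> m1 + m2"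
      and adj: "A s s'" "iadj t t'" "d s s' + ndiff t t' \<le> u"
    show "B (H (s, t)) (H (s', t'))"
    proof (cases "t \<le> m1 \<and> t' \<le> m1")
      case True
      then show ?thesis using H1(4) s adj by (simp add: H_first)
    next
      case False
      with adj(2) have "m1 \<le> t" "m1 \<le> t'" by (auto simp: iadj_def)
      moreover have "iadj (t - m1) (t' - m1)" "ndiff (t - m1) (t' - m1) = ndiff t t'"
        using adj(2) calculation by (auto simp: iadj_def ndiff_def)
      ultimately show ?thesis using H2(4)[of s s' "t - m1" "t' - m1"] s t adj by (simp add: H_second)
    qed
  qed (use H1 H2 H_first H_second in auto)
qed

lemma np_htpy_gen_comp_left:
  assumes "dcont Y B Y' B' h" and "np_htpy_gen u S A d Y B f g"
  shows "np_htpy_gen u S A d Y' B' (h \<circ> f) (h \<circ> g)"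
  using assms(2)
proof (elim np_htpy_genE)
  fix H m
  assume "\<And>s. s \<in> S \<Longrightarrow> H (s, 0) = f s" "\<And>s. s \<in> S \<Longrightarrow> H (s, m) = g s"
    "\<And>s t. s \<in> S \<Longrightarrow> t \<le> m \<Longrightarrow> H (s, t) \<in> Y"
    "\<And>s s' t t'. \<lbrakk>s \<in> S; s' \<in> S; t \<le> m; t' \<le> m; A s s'; iadj t t'; d s s' + ndiff t t' \<le> u\<rbrakk>
       \<Longrightarrow> B (H (s, t)) (H (s', t'))"
  with assms(1) show ?thesis
    by (intro np_htpy_genI[where m = m and H = "h \<circ> H"]) (auto simp: dcont_def)
qed

lemma np_htpy_comp_right:
  assumes "dcont X' A' X A k" and "np_htpy u X A Y B f g"
  shows "np_htpy u X' A' Y B (f \<circ> k) (g \<circ> k)"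
  using assms(2) unfolding np_htpy_def
proof (elim np_htpy_genE)
  fix H m
  assume "\<And>s. s \<in> X \<Longrightarrow> H (s, 0) = f s" "\<And>s. s \<in> X \<Longrightarrow> H (s, m) = g s"
    "\<And>s t. s \<in> X \<Longrightarrow> t \<le> m \<Longrightarrow> H (s, t) \<in> Y"
    and cont: "\<And>s s' t t'. \<lbrakk>s \<in> X; s' \<in> X; t \<le> m; t' \<le> m; A s s'; iadj t t'; ndiff s s' + ndiff t t' \<le> u\<rbrakk>
       \<Longrightarrow> B (H (s, t)) (H (s', t'))"
  then show "np_htpy_gen u X' A' ndiff Y B (f \<circ> k) (g \<circ> k)"
    using assms(1) unfolding dcont_def
    by (intro np_htpy_genI[where m = m and H = "\<lambda>(s, t). H (k s, t)"])
       (auto intro!: cont simp: ndiff_def split: if_splits)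
qed

lemma dcomponent_adjacent:
  assumes "x \<in> dcomponent Y B y" and "x' \<in> Y" and "B x x'"
  shows "x' \<in> dcomponent Y B y"
  using assms unfolding dcomponent_def by (auto intro: rtranclp.rtrancl_into_rtrancl)

lemma dcont_dcomponent:
  assumes "dcont X A Y B h" and "x \<in> X"
  shows "h ` dcomponent X A x \<subseteq> dcomponent Y B (h x)"
proof
  fix y' assume "y' \<in> h ` dcomponent X A x"
  then obtain x' where "(\<lambda>a b. a \<in> X \<and> b \<in> X \<and> A a b)\<^sup>*\<^sup>* x x'" "y' = h x'"
    unfolding dcomponent_def by blast
  then show "y' \<in> dcomponent Y B (h x)"
  proof (induction arbitrary: y' rule: rtranclp_induct)
    case base
    then show ?case using assms unfolding dcomponent_def dcont_def by auto
  next
    case (step x1 x2)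
    then show ?case using assms(1) unfolding dcont_def by (auto intro: dcomponent_adjacent)
  qed
qed

lemma np_htpy_gen_dcomponent:
  assumes htpy: "np_htpy_gen u S A d Y B f g" and "1 \<le> u"
    and refl: "\<And>s. s \<in> S \<Longrightarrow> A s s \<and> d s s = 0" and "g ` S \<subseteq> dcomponent Y B y"
  shows "np_htpy_gen u S A d (dcomponent Y B y) B f g"
  using htpy
proof (elim np_htpy_genE)
  fix H m
  assume H: "\<And>s. s \<in> S \<Longrightarrow> H (s, 0) = f s" "\<And>s. s \<in> S \<Longrightarrow> H (s, m) = g s"
    "\<And>s t. s \<in> S \<Longrightarrow> t \<le> m \<Longrightarrow> H (s, t) \<in> Y"
    "\<And>s s' t t'. \<lbrakk>s \<in> S; s' \<in> S; t \<le> m; t' \<le> m; A s s'; iadj t t'; d s s' + ndiff t t' \<le> u\<rbrakk>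
       \<Longrightarrow> B (H (s, t)) (H (s', t'))"
  have "H (s, t) \<in> dcomponent Y B y" if s: "s \<in> S" and "t \<le> m" for s t
    using \<open>t \<le> m\<close>
  proof (induction rule: inc_induct)
    case base
    then show ?case using H(2) s assms(4) by auto
  next
    case (step n)
    moreover have "B (H (s, Suc n)) (H (s, n))"
      using H(4)[of s s "Suc n" n] refl s step \<open>1 \<le> u\<close> by (simp add: iadj_def ndiff_def)
    ultimately show ?case using H(3) s by (auto intro: dcomponent_adjacent)
  qed
  then show ?thesis using H by (intro np_htpy_genI[where m = m and H = H])
qed

lemma np_unital_hspaceI:
  assumes "digital_image X A" and "e \<in> X" and "dcont (X \<times> X) (np_adj u A A) X A \<mu>"
    and "\<And>x. x \<in> X \<Longrightarrow> \<mu> (x, e) = x \<and> \<mu> (e, x) = x"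
  shows "np_unital_hspace u X A e \<mu>"
proof -
  have "np_htpy u X A X A id id"
    unfolding np_htpy_def by (rule np_htpy_gen_refl) (simp add: dcont_def)
  then have "np_htpy u X A X A (\<lambda>x. \<mu> (x, e)) id" "np_htpy u X A X A (\<lambda>x. \<mu> (e, x)) id"
    unfolding np_htpy_def by (auto elim!: np_htpy_gen_cong simp: assms(4))
  then show ?thesis
    using assms unfolding np_unital_hspace_def np_hspace_def by blast
qed

lemma dcont_comp:
  assumes "dcont X A Y B f" and "dcont Y B W D g"
  shows "dcont X A W D (g \<circ> f)"
  using assms unfolding dcont_def by simp

lemma dcont_subset:
  assumes "dcont X A Y B f" and "X' \<subseteq> X"
  shows "dcont X' A Y B f"
  using assms unfolding dcont_def by blast

lemma np_contractibleI:
  assumes "c \<in> X" and "A c c" and "np_htpy u X A X A (\<lambda>_. c) id"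
  shows "np_contractible u X A"
  unfolding np_contractible_def np_hequiv_def
proof (intro exI conjI)
  show "dcont X A {()} (\<lambda>_ _. True) (\<lambda>_. ())" "dcont {()} (\<lambda>_ _. True) X A (\<lambda>_. c)"
    using assms(1,2) by (auto simp: dcont_def)
  show "np_htpy u {()} (\<lambda>_ _. True) {()} (\<lambda>_ _. True) ((\<lambda>_. ()) \<circ> (\<lambda>_. c)) id"
    unfolding np_htpy_def by (rule np_htpy_genI[where m = 0 and H = "\<lambda>_. ()"]) auto
  show "np_htpy u X A X A ((\<lambda>_. c) \<circ> (\<lambda>_. ())) id"
    using assms(3) by (simp add: comp_def)
qed

lemma np_dtop_group_left_mult_dcont:
  assumes "np_dtop_group u G B" and "1 \<le> u" and "a \<in> carrier G"
  shows "dcont (carrier G) B (carrier G) B (\<lambda>x. a \<otimes>\<^bsub>G\<^esub> x)"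
proof -
  have "group G" and "B a a"
    and "dcont (carrier G \<times> carrier G) (np_adj u B B) (carrier G) B (\<lambda>p. fst p \<otimes>\<^bsub>G\<^esub> snd p)"
    using assms unfolding np_dtop_group_def digital_image_def by auto
  moreover have "np_adj u B B (a, x) (a, x')" if "B x x'" for x x'
    using that \<open>B a a\<close> \<open>1 \<le> u\<close> by (auto simp: np_adj_def pair_adj_def pair_ndiff_def ndiff_def)
  ultimately show ?thesis
    using assms(3) unfolding dcont_def by (auto intro: monoid.m_closed group.is_monoid)
qed

lemma adj_point_adj_simps [simp]:
  "adj_point_adj A (Some x) (Some y) = A x y"
  "adj_point_adj A None None"
  "\<not> adj_point_adj A None (Some y)"
  "\<not> adj_point_adj A (Some x) None"
  by (simp_all add: adj_point_adj_def)

lemma adj_point_mult_simps [simp]: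
  "adj_point_mult \<tau> (Some x, Some y) = Some (\<tau> (x, y))"
  "adj_point_mult \<tau> (a, None) = a"
  "adj_point_mult \<tau> (None, b) = b"
  by (simp_all add: adj_point_mult_def split: option.splits)

lemma adj_point_adjE:
  assumes "adj_point_adj A x y"
  obtains "x = None" "y = None" | a b where "x = Some a" "y = Some b" "A a b"
  using assms by (cases x; cases y) auto

lemma ndiff_Some [simp]: "ndiff (Some x) (Some y) = ndiff x y"
  by (simp add: ndiff_def)

lemma digital_image_adj_point:
  assumes "digital_image Z A"
  shows "digital_image (insert None (Some ` Z)) (adj_point_adj A)"
  using assms unfolding digital_image_def by auto

lemma dcont_adj_point_mult:
  assumes "dcont (Z \<times> Z) (np_adj u A A) Z A \<tau>"
  shows "dcont (insert None (Some ` Z) \<times> insert None (Some ` Z))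
           (np_adj u (adj_point_adj A) (adj_point_adj A))
           (insert None (Some ` Z)) (adj_point_adj A) (adj_point_mult \<tau>)"
  unfolding dcont_def
proof (intro conjI ballI impI)
  fix p assume "p \<in> insert None (Some ` Z) \<times> insert None (Some ` Z)"
  then show "adj_point_mult \<tau> p \<in> insert None (Some ` Z)"
    using assms unfolding dcont_def by auto
next
  fix p q
  assume p: "p \<in> insert None (Some ` Z) \<times> insert None (Some ` Z)"
    and q: "q \<in> insert None (Some ` Z) \<times> insert None (Some ` Z)"
    and adj: "np_adj u (adj_point_adj A) (adj_point_adj A) p q"
  obtain a b a' b' where pq: "p = (a, b)" "q = (a', b')"
    by fastforce
  from adj have "adj_point_adj A a a'" "adj_point_adj A b b'"
    by (simp_all add: pq np_adj_def pair_adj_def)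
  then show "adj_point_adj A (adj_point_mult \<tau> p) (adj_point_mult \<tau> q)"
  proof (elim adj_point_adjE)
    fix x y x' y' assume "a = Some x" "a' = Some x'" "A x x'" "b = Some y" "b' = Some y'" "A y y'"
    then show ?thesis
      using p q adj assms unfolding dcont_def pq by (auto simp: np_adj_def pair_adj_def pair_ndiff_def)
  qed (simp_all add: pq)
qed

lemma dcomponent_adj_point_None:
  "dcomponent (insert None (Some ` Z)) (adj_point_adj A) None = {None}"
proof -
  have "y = None" if "(\<lambda>a b. a \<in> insert None (Some ` Z) \<and> b \<in> insert None (Some ` Z) \<and> adj_point_adj A a b)\<^sup>*\<^sup>* None y" for y
    using that
  proof (induction rule: rtranclp_induct)
    case base
    show ?case by simp
  next
    case (step y z)
    then show ?case by (cases z) auto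
  qed
  then show ?thesis unfolding dcomponent_def by blast
qed

lemma dcont_Some_adj_point: "dcont Z A (insert None (Some ` Z)) (adj_point_adj A) Some"
  by (simp add: dcont_def)

lemma dcomponent_adj_point_Some:
  assumes "z \<in> Z"
  shows "dcomponent (insert None (Some ` Z)) (adj_point_adj A) (Some z) = Some ` dcomponent Z A z"
proof
  show "Some ` dcomponent Z A z \<subseteq> dcomponent (insert None (Some ` Z)) (adj_point_adj A) (Some z)"
    using dcont_dcomponent[OF dcont_Some_adj_point assms] .
  have "\<exists>c. y = Some c \<and> c \<in> dcomponent Z A z"
    if "(\<lambda>a b. a \<in> insert None (Some ` Z) \<and> b \<in> insert None (Some ` Z) \<and> adj_point_adj A a b)\<^sup>*\<^sup>* (Some z) y"
    for y
    using that
  proof (induction rule: rtranclp_induct)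
    case base
    show ?case using assms by (simp add: dcomponent_def)
  next
    case (step y y')
    then obtain c where "y = Some c" "c \<in> dcomponent Z A z" by blast
    with step.hyps(2) show ?case by (cases y') (auto intro: dcomponent_adjacent)
  qed
  then show "dcomponent (insert None (Some ` Z)) (adj_point_adj A) (Some z) \<subseteq> Some ` dcomponent Z A z"
    unfolding dcomponent_def[of "insert None (Some ` Z)"] by blast
qed


lemma dcomponent_contractible_if_inclusion_null_homotopic:
  assumes "1 \<le> u" and "digital_image Z A" and "z \<in> Z"
    and "np_htpy u (dcomponent Z A z) A (insert None (Some ` Z)) (adj_point_adj A) (\<lambda>_. x) Some"
  shows "np_contractible u (dcomponent Z A z) A"
proof -
  define C where "C = dcomponent Z A z"
  have refl: "\<And>c. c \<in> Z \<Longrightarrow> A c c"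
    using assms(2) by (simp add: digital_image_def)
  have "C \<subseteq> Z" "z \<in> C"
    using \<open>z \<in> Z\<close> by (auto simp: C_def dcomponent_def)
  have "np_htpy u C A (dcomponent (insert None (Some ` Z)) (adj_point_adj A) (Some z)) (adj_point_adj A)
          (\<lambda>_. x) Some"
    using assms(4) unfolding np_htpy_def C_def
    by (rule np_htpy_gen_dcomponent)
       (use \<open>1 \<le> u\<close> refl \<open>C \<subseteq> Z\<close> dcomponent_adj_point_Some[OF \<open>z \<in> Z\<close>] in \<open>auto simp: C_def ndiff_def\<close>)
  then have "np_htpy u C A (Some ` C) (adj_point_adj A) (\<lambda>_. x) Some"
    by (simp add: C_def dcomponent_adj_point_Some[OF \<open>z \<in> Z\<close>])
  then have "np_htpy u C A C A (the \<circ> (\<lambda>_. x)) (the \<circ> Some)"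
    unfolding np_htpy_def by (rule np_htpy_gen_comp_left[rotated]) (auto simp: dcont_def)
  then have htpy: "np_htpy u C A C A (\<lambda>_. the x) id"
    unfolding np_htpy_def by (rule np_htpy_gen_cong) auto
  moreover have "the x \<in> C"
    using np_htpy_gen_start_mem[OF htpy[unfolded np_htpy_def] \<open>z \<in> C\<close>] .
  ultimately show ?thesis
    using \<open>C \<subseteq> Z\<close> refl by (auto simp: C_def intro: np_contractibleI)
qed

lemma dcomponent_contractible_if_h_equiv_dtop_group:
  fixes G :: "'g monoid" (structure)
  assumes "1 \<le> u" and "digital_image Z A" and "z \<in> Z" and grp: "np_dtop_group u G B"
    and "np_h_equiv u (insert None (Some ` Z)) (adj_point_adj A) None \<mu> (carrier G) B \<one> \<nu>"
  shows "np_contractible u (dcomponent Z A z) A"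
proof -
  define X where "X = insert None (Some ` Z)"
  define C where "C = dcomponent Z A z"
  obtain f g where f: "dcont X (adj_point_adj A) (carrier G) B f" and "f None = \<one>"
    and g: "dcont (carrier G) B X (adj_point_adj A) g" and "g \<one> = None"
    and fg: "np_htpy u (carrier G) B (carrier G) B (f \<circ> g) id"
    and gf: "np_htpy u X (adj_point_adj A) X (adj_point_adj A) (g \<circ> f) id"
    using assms(5) unfolding np_h_equiv_def X_def by blast
  interpret group G
    using grp by (simp add: np_dtop_group_def)
  have "C \<subseteq> Z"
    by (auto simp: C_def dcomponent_def)
  define a where "a = f (Some z)"
  have "a \<in> carrier G"
    using f \<open>z \<in> Z\<close> by (simp add: dcont_def X_def a_def)
  define k where "k = (\<lambda>c. inv a \<otimes> f (Some c))"
  have k: "dcont Z A (carrier G) B k"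
    using dcont_comp[OF dcont_comp[OF dcont_Some_adj_point f[unfolded X_def]]
        np_dtop_group_left_mult_dcont[OF grp \<open>1 \<le> u\<close> inv_closed[OF \<open>a \<in> carrier G\<close>]]]
    by (simp add: comp_def k_def)
  have g_k: "g (k c) = None" if "c \<in> C" for c
  proof -
    have "k z = \<one>"
      using \<open>a \<in> carrier G\<close> by (simp add: k_def a_def)
    then have "k c \<in> dcomponent (carrier G) B \<one>"
      using dcont_dcomponent[OF k \<open>z \<in> Z\<close>] that by (auto simp: C_def)
    then have "g (k c) \<in> dcomponent X (adj_point_adj A) (g \<one>)"
      using dcont_dcomponent[OF g one_closed] by auto
    then show ?thesis
      using \<open>g \<one> = None\<close> by (simp add: X_def dcomponent_adj_point_None)
  qed
  have translate: "dcont (carrier G) B X (adj_point_adj A) (g \<circ> (\<lambda>x. a \<otimes> x))"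
    using np_dtop_group_left_mult_dcont[OF grp \<open>1 \<le> u\<close> \<open>a \<in> carrier G\<close>] g by (rule dcont_comp)
  have "np_htpy u C A (carrier G) B (f \<circ> g \<circ> k) k"
    using np_htpy_comp_right[OF dcont_subset[OF k \<open>C \<subseteq> Z\<close>] fg] by simp
  then have "np_htpy u C A X (adj_point_adj A) (g \<circ> (\<lambda>x. a \<otimes> x) \<circ> (f \<circ> g \<circ> k)) (g \<circ> (\<lambda>x. a \<otimes> x) \<circ> k)"
    unfolding np_htpy_def by (rule np_htpy_gen_comp_left[OF translate])
  then have "np_htpy u C A X (adj_point_adj A) (\<lambda>_. g a) (g \<circ> f \<circ> Some)"
    unfolding np_htpy_def
    by (rule np_htpy_gen_cong) (use g_k \<open>a \<in> carrier G\<close> \<open>C \<subseteq> Z\<close> f in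
        \<open>auto simp: k_def X_def dcont_def m_assoc[symmetric] \<open>f None = \<one>\<close>\<close>)
  moreover have "np_htpy u C A X (adj_point_adj A) (g \<circ> f \<circ> Some) (id \<circ> Some)"
    using np_htpy_comp_right[OF dcont_subset[OF dcont_Some_adj_point \<open>C \<subseteq> Z\<close>] gf[unfolded X_def]]
    by (simp add: X_def comp_assoc)
  ultimately have "np_htpy u C A X (adj_point_adj A) (\<lambda>_. g a) Some"
    unfolding np_htpy_def by (auto intro: np_htpy_gen_trans)
  then show ?thesis
    using dcomponent_contractible_if_inclusion_null_homotopic[OF assms(1-3)] by (simp add: X_def C_def)
qed

theorem mainTheorem14:
  fixes i :: nat and Z :: "'a set" and adjZ :: "'a \<Rightarrow> 'a \<Rightarrow> bool" and \<tau> :: "'a \<times> 'a \<Rightarrow> 'a"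
  assumes "i \<in> {1, 2}"
    and "digital_image Z adjZ"
    and "dcont (Z \<times> Z) (np_adj i adjZ adjZ) Z adjZ \<tau>"
  shows "dcont (insert None (Some ` Z) \<times> insert None (Some ` Z))
            (np_adj i (adj_point_adj adjZ) (adj_point_adj adjZ))
            (insert None (Some ` Z)) (adj_point_adj adjZ) (adj_point_mult \<tau>)
       \<and> np_unital_hspace i (insert None (Some ` Z)) (adj_point_adj adjZ) None (adj_point_mult \<tau>)
       \<and> ((\<exists>z\<in>Z. \<not> np_contractible i (dcomponent Z adjZ z) adjZ) \<longrightarrow>
            \<not> (\<exists>(G :: 'g monoid) B. np_dtop_group i G B \<and>
                 np_h_equiv i (insert None (Some ` Z)) (adj_point_adj adjZ) None (adj_point_mult \<tau>)
                   (carrier G) B \<one>\<^bsub>G\<^esub> (\<lambda>p. fst p \<otimes>\<^bsub>G\<^esub> snd p)))"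
proof -
  have "1 \<le> i"
    using assms(1) by auto
  have mult: "dcont (insert None (Some ` Z) \<times> insert None (Some ` Z))
      (np_adj i (adj_point_adj adjZ) (adj_point_adj adjZ))
      (insert None (Some ` Z)) (adj_point_adj adjZ) (adj_point_mult \<tau>)"
    using assms(3) by (rule dcont_adj_point_mult)
  moreover have "np_unital_hspace i (insert None (Some ` Z)) (adj_point_adj adjZ) None (adj_point_mult \<tau>)"
    using digital_image_adj_point[OF assms(2)] mult by (intro np_unital_hspaceI) auto
  moreover have "np_contractible i (dcomponent Z adjZ z) adjZ"
    if "z \<in> Z" and "np_dtop_group i G B"
      and "np_h_equiv i (insert None (Some ` Z)) (adj_point_adj adjZ) None (adj_point_mult \<tau>)
             (carrier G) B \<one>\<^bsub>G\<^esub> (\<lambda>p. fst p \<otimes>\<^bsub>G\<^esub> snd p)"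
    for z and G :: "'g monoid" and B
    using dcomponent_contractible_if_h_equiv_dtop_group[OF \<open>1 \<le> i\<close> assms(2)] that by blast
  ultimately show ?thesis
    by blast
qed

end
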